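(* As formal power series, \[ B^{(\mathrm{pk},\mathrm{des})}\Big(xt,\,y,\,\tfrac1t\Big)\,B^{(\mathrm{pk},\mathrm{des})}(x,y,t)=(1+t)\,P^{(\mathrm{pk},\mathrm{des})}(x,y,t)-t. \]
   Context: For a permutation $\pi=\pi_1\cdots\pi_n$ of $[n]$, $\operatorname{des}(\pi)$ is the number of $1\le i\le n-1$ with $\pi_i>\pi_{i+1}$, $\operatorname{asc}(\pi)$ the number with $\pi_i<\pi_{i+1}$, and $\operatorname{pk}(\pi)$ the number of $2\le i\le n-1$ with $\pi_{i-1}<\pi_i>\pi_{i+1}$. A ballot permutation is one with $\operatorname{asc}(\pi_1\cdots\pi_i)\ge\operatorname{des}(\pi_1\cdots\pi_i)$ for all $i$; $\mathscr B_n$ is the set of ballot permutations of $[n]$, $\mathscr B_0=\mathcal S_0=\{\epsilon\}$ (empty permutation, with all statistics $0$). Define $P^{(\mathrm{pk},\mathrm{des})}(x,y,t)=\sum_{n\ge0}\sum_{\pi\in\mathcal S_n} y^{\operatorname{pk}(\pi)}t^{\operatorname{des}(\pi)}\frac{x^n}{n!}$ and $B^{(\mathrm{pk},\mathrm{des})}(x,y,t)=\sum_{n\ge0}\sum_{\pi\in\mathscr B_n} y^{\operatorname{pk}(\pi)}t^{\operatorname{des}(\pi)}\frac{x^n}{n!}$. *)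

theory Defs
  imports "HOL-Combinatorics.Multiset_Permutations" "HOL-Computational_Algebra.Formal_Power_Series"
begin

text \<open>Permutations of [n] are represented as lists (one-line notation) in
  permutations_of_set {1..n}; list positions are 0-based.\<close>

definition des :: "nat list \<Rightarrow> nat" where
  "des p = card {i. i + 1 < length p \<and> p ! i > p ! (i + 1)}"

definition asc :: "nat list \<Rightarrow> nat" where
  "asc p = card {i. i + 1 < length p \<and> p ! i < p ! (i + 1)}"

definition pk :: "nat list \<Rightarrow> nat" where
  "pk p = card {i. 0 < i \<and> i + 1 < length p \<and> p ! (i - 1) < p ! i \<and> p ! i > p ! (i + 1)}"

definition ballot :: "nat list \<Rightarrow> bool" where
  "ballot p \<longleftrightarrow> (\<forall>i\<le>length p. asc (take i p) \<ge> des (take i p))"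

definition ballot_perms :: "nat \<Rightarrow> nat list set" where
  "ballot_perms n = {p \<in> permutations_of_set {1..n}. ballot p}"

definition Pgf :: "real \<Rightarrow> real \<Rightarrow> real fps" where
  "Pgf y t = Abs_fps (\<lambda>n. (\<Sum>p\<in>permutations_of_set {1..n}. y ^ pk p * t ^ des p) / fact n)"

definition Bgf :: "real \<Rightarrow> real \<Rightarrow> real fps" where
  "Bgf y t = Abs_fps (\<lambda>n. (\<Sum>p\<in>ballot_perms n. y ^ pk p * t ^ des p) / fact n)"

end

theory Submission
  imports Defs "HOL-Library.Infinite_Set"
begin

text \<open>
  The product on the left is an exponential convolution, so its n-th coefficient (times n!)
  sums y^(pk a + pk b) t^(|a| - des a + des b) over pairs (a, b) of ballot permutations of
  complementary subsets of [n]. Glue such a pair to the permutation p = rev a @ b. Ballot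
  permutations start with an ascent, so no peak appears at the junction; and for nonempty a,
  |a| - des a = asc a + 1 while the descents of rev a are the ascents of a. Hence the pair
  has the pk/des-weight of p, times t exactly when the junction is an ascent (a cut at the
  end of p counting as an ascent, one at the start as a descent).

  Conversely, p = rev a @ b with a and b ballot iff the up-down walk of p (ascents minus
  descents) is minimal, among the positions before the cut, at the last of them, and among
  the positions after the cut, at the first of them. A nonempty permutation has exactly two
  such cuts: at the first global minimum of the walk, entered by a descent (or at the start),
  and right after the last global minimum, left by an ascent (or at the end). So each
  permutation contributes (1 + t) times its weight, except the empty one, which
  contributes 1.
\<close>

section \<open>Descents, ascents and peaks of lists\<close>

lemma card_Collect_nat_shift:
  assumes "finite {i. P (Suc i)}"
  shows "card {i::nat. P i} = of_bool (P 0) + card {i. P (Suc i)}"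
proof -
  have "{i. P i} = {i. i = 0 \<and> P 0} \<union> Suc ` {i. P (Suc i)}"
    by (auto simp: image_iff) (metis not0_implies_Suc)+
  moreover have "{i. i = 0 \<and> P 0} \<inter> Suc ` {i. P (Suc i)} = {}" by auto
  ultimately show ?thesis
    using assms by (simp add: card_Un_disjoint card_image)
qed

lemma des_Nil [simp]: "des [] = 0"
  and des_singleton [simp]: "des [x] = 0"
  by (simp_all add: des_def)

lemma asc_Nil [simp]: "asc [] = 0"
  and asc_singleton [simp]: "asc [x] = 0"
  by (simp_all add: asc_def)

lemma pk_altdef: "pk p = card {i. i + 2 < length p \<and> p ! i < p ! (i + 1) \<and> p ! (i + 2) < p ! (i + 1)}"
proof -
  have "{i. 0 < i \<and> i + 1 < length p \<and> p ! (i - 1) < p ! i \<and> p ! i > p ! (i + 1)}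
      = Suc ` {i. i + 2 < length p \<and> p ! i < p ! (i + 1) \<and> p ! (i + 2) < p ! (i + 1)}"
    by (auto simp: image_iff) (metis Suc_pred add_2_eq_Suc')
  then show ?thesis
    unfolding pk_def by (simp add: card_image)
qed

lemma pk_short [simp]: "pk [] = 0" "pk [x] = 0" "pk [x, y] = 0"
  by (simp_all add: pk_altdef)

lemma des_Cons_Cons [simp]: "des (x # y # zs) = of_bool (y < x) + des (y # zs)"
  unfolding des_def by (subst card_Collect_nat_shift) simp_all

lemma asc_Cons_Cons [simp]: "asc (x # y # zs) = of_bool (x < y) + asc (y # zs)"
  unfolding asc_def by (subst card_Collect_nat_shift) simp_all

lemma pk_Cons_Cons_Cons [simp]:
  "pk (x # y # z # ws) = of_bool (x < y \<and> z < y) + pk (y # z # ws)"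
  unfolding pk_altdef by (subst card_Collect_nat_shift) (simp_all add: numeral_2_eq_2)

lemma des_Cons: "des (x # xs) = of_bool (xs \<noteq> [] \<and> hd xs < x) + des xs"
  by (cases xs) simp_all

lemma asc_Cons: "asc (x # xs) = of_bool (xs \<noteq> [] \<and> x < hd xs) + asc xs"
  by (cases xs) simp_all

lemma pk_Cons: "pk (x # xs) = of_bool (2 \<le> length xs \<and> x < xs ! 0 \<and> xs ! 1 < xs ! 0) + pk xs"
  by (cases xs rule: remdups_adj.cases) simp_all

lemma des_append:
  "des (xs @ ys) = des xs + des ys + of_bool (xs \<noteq> [] \<and> ys \<noteq> [] \<and> hd ys < last xs)"
  by (induction xs) (auto simp: des_Cons hd_append)

lemma asc_append:
  "asc (xs @ ys) = asc xs + asc ys + of_bool (xs \<noteq> [] \<and> ys \<noteq> [] \<and> last xs < hd ys)"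
  by (induction xs) (auto simp: asc_Cons hd_append)

lemma pk_append:
  "pk (xs @ ys) = pk xs + pk ys
     + of_bool (2 \<le> length xs \<and> ys \<noteq> [] \<and> xs ! (length xs - 2) < last xs \<and> hd ys < last xs)
     + of_bool (xs \<noteq> [] \<and> 2 \<le> length ys \<and> last xs < hd ys \<and> ys ! 1 < hd ys)"
proof (induction xs)
  case (Cons x xs)
  then show ?case
    by (cases xs rule: remdups_adj.cases; cases ys rule: remdups_adj.cases)
      (auto simp: pk_Cons nth_append)
qed simp

lemma des_rev: "des (rev xs) = asc xs"
  by (induction xs) (auto simp: des_append asc_Cons last_rev)

lemma pk_snoc_snoc: "pk (xs @ [y, z]) = pk (xs @ [y]) + of_bool (xs \<noteq> [] \<and> last xs < y \<and> z < y)"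
  using pk_append[of "xs @ [y]" "[z]"] by (cases xs rule: rev_cases) (simp_all add: nth_append)

lemma pk_rev: "pk (rev xs) = pk xs"
proof (induction xs rule: induct_list012)
  case (3 x y zs)
  then show ?case
    using pk_snoc_snoc[of "rev zs" y x] by (cases zs) (auto simp: last_rev)
qed simp_all

lemma asc_add_des: "distinct xs \<Longrightarrow> asc xs + des xs = length xs - 1"
  by (induction xs rule: induct_list012) auto

lemma ballot_no_initial_descent:
  assumes "ballot p" "2 \<le> length p"
  shows "\<not> p ! 1 < p ! 0"
proof -
  obtain x y zs where p: "p = x # y # zs"
    using assms(2) by (cases p rule: remdups_adj.cases) auto
  have "des (take 2 p) \<le> asc (take 2 p)"
    using assms unfolding ballot_def by blast
  then show ?thesis
    by (simp add: p numeral_2_eq_2)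
qed

lemma des_rev_append:
  "des (rev a @ b) = asc a + des b + of_bool (a \<noteq> [] \<and> b \<noteq> [] \<and> hd b < hd a)"
  by (simp add: des_append des_rev last_rev)

lemma pk_rev_append_ballot:
  assumes "ballot a" "ballot b"
  shows "pk (rev a @ b) = pk a + pk b"
proof -
  have "\<not> rev a ! (length a - 2) < last (rev a)" if "2 \<le> length a"
    using that ballot_no_initial_descent[OF assms(1)]
    by (cases a rule: remdups_adj.cases) (auto simp: nth_append)
  moreover have "\<not> b ! 1 < hd b" if "2 \<le> length b"
    using that ballot_no_initial_descent[OF assms(2)] by (cases b) auto
  ultimately show ?thesis
    by (auto simp: pk_append pk_rev)
qed

lemma des_map_strict_mono_on: "strict_mono_on (set p) g \<Longrightarrow> des (map g p) = des p"
  unfolding des_def by (intro arg_cong[where f = card] Collect_cong) (auto simp: strict_mono_on_less)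

lemma asc_map_strict_mono_on: "strict_mono_on (set p) g \<Longrightarrow> asc (map g p) = asc p"
  unfolding asc_def by (intro arg_cong[where f = card] Collect_cong) (auto simp: strict_mono_on_less)

lemma pk_map_strict_mono_on: "strict_mono_on (set p) g \<Longrightarrow> pk (map g p) = pk p"
  unfolding pk_def by (intro arg_cong[where f = card] Collect_cong) (auto simp: strict_mono_on_less)

lemma ballot_map_strict_mono_on:
  assumes "strict_mono_on (set p) g"
  shows "ballot (map g p) \<longleftrightarrow> ballot p"
proof -
  have "strict_mono_on (set (take i p)) g" for i
    using assms set_take_subset by (rule monotone_on_subset)
  then show ?thesis
    by (simp add: ballot_def take_map des_map_strict_mono_on asc_map_strict_mono_on)
qed

section \<open>The up-down walk of a list\<close>

text \<open>The walk is indexed by the 0-based positions of the list: \<^term>\<open>height p i\<close>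
  counts the ascents minus the descents among the first \<^term>\<open>i\<close> steps.\<close>

definition height :: "nat list \<Rightarrow> nat \<Rightarrow> int" where
  "height p i = int (asc (take (Suc i) p)) - int (des (take (Suc i) p))"

lemma height_0 [simp]: "height p 0 = 0"
  by (cases p) (simp_all add: height_def)

lemma height_Suc:
  assumes "Suc k < length p"
  shows "height p (Suc k) = height p k + of_bool (p ! k < p ! Suc k) - of_bool (p ! Suc k < p ! k)"
proof -
  have "take (Suc (Suc k)) p = take (Suc k) p @ [p ! Suc k]" "last (take (Suc k) p) = p ! k"
    using assms by (simp_all add: take_Suc_conv_app_nth)
  with assms show ?thesis
    unfolding height_def by (auto simp: asc_append des_append)
qed

lemma height_Suc_distinct:
  assumes "distinct p" "Suc k < length p"
  shows "height p (Suc k) = height p k + (if p ! k < p ! Suc k then 1 else -1)"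
  using assms nth_eq_iff_index_eq[of p k "Suc k"] by (auto simp: height_Suc)

lemma ballot_iff_height: "ballot p \<longleftrightarrow> (\<forall>i<length p. 0 \<le> height p i)"
  unfolding ballot_def height_def
  by (simp add: All_less_Suc2 flip: less_Suc_eq_le)

lemma height_drop: "j + i < length p \<Longrightarrow> height (drop j p) i = height p (j + i) - height p j"
  by (induction i) (simp_all add: height_Suc)

lemma height_rev_take:
  "m < j \<Longrightarrow> j \<le> length p \<Longrightarrow>
    height (rev (take j p)) m = height p (j - 1 - m) - height p (j - 1)"
proof (induction m)
  case (Suc m)
  define k where "k = j - Suc (Suc m)"
  have k: "Suc k = j - Suc m" "j - 1 - Suc m = k" "Suc k < length p"
    using Suc.prems by (simp_all add: k_def)
  have "rev (take j p) ! m = p ! Suc k" "rev (take j p) ! Suc m = p ! k"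
    using Suc.prems by (simp_all add: rev_nth k_def flip: k(1))
  moreover have "height p (j - Suc m) = height p k + of_bool (p ! k < p ! Suc k) - of_bool (p ! Suc k < p ! k)"
    using height_Suc[OF k(3)] by (simp only: k(1))
  ultimately show ?case
    using Suc k(2) by (simp add: height_Suc[of m] k(1))
qed simp

lemma ballot_drop_iff_height:
  "ballot (drop j p) \<longleftrightarrow> (\<forall>i. j \<le> i \<and> i < length p \<longrightarrow> height p j \<le> height p i)"
proof -
  have "ballot (drop j p) \<longleftrightarrow> (\<forall>i<length p - j. height p j \<le> height p (j + i))"
    by (simp add: ballot_iff_height height_drop)
  also have "\<dots> \<longleftrightarrow> (\<forall>i. j \<le> i \<and> i < length p \<longrightarrow> height p j \<le> height p i)"
  proof (intro iffI allI impI)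
    fix i assume "\<forall>i<length p - j. height p j \<le> height p (j + i)" "j \<le> i \<and> i < length p"
    then show "height p j \<le> height p i"
      by (auto dest: spec[of _ "i - j"])
  qed auto
  finally show ?thesis .
qed

lemma ballot_rev_take_iff_height:
  assumes "j \<le> length p"
  shows "ballot (rev (take j p)) \<longleftrightarrow> (\<forall>i<j. height p (j - 1) \<le> height p i)"
proof -
  have "ballot (rev (take j p)) \<longleftrightarrow> (\<forall>m<j. height p (j - 1) \<le> height p (j - 1 - m))"
    using assms by (simp add: ballot_iff_height height_rev_take min_absorb2)
  also have "\<dots> \<longleftrightarrow> (\<forall>i<j. height p (j - 1) \<le> height p i)"
  proof (intro iffI allI impI)
    fix i assume "\<forall>m<j. height p (j - 1) \<le> height p (j - 1 - m)" "i < j"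
    then show "height p (j - 1) \<le> height p i"
      by (auto dest: spec[of _ "j - 1 - i"])
  qed auto
  finally show ?thesis .
qed

section \<open>Ballot splittings of a permutation\<close>

lemma ex_first_argmin:
  fixes f :: "nat \<Rightarrow> 'a::linorder"
  assumes "0 < n"
  shows "\<exists>j<n. (\<forall>i<n. f j \<le> f i) \<and> (\<forall>i<j. f j < f i)"
  using assms
proof (induction n)
  case (Suc n)
  show ?case
  proof (cases "n = 0")
    case False
    then obtain j where j: "j < n" "\<forall>i<n. f j \<le> f i" "\<forall>i<j. f j < f i"
      using Suc.IH by blast
    show ?thesis
    proof (cases "f n < f j")
      case True
      with j show ?thesis
        by (intro exI[of _ n]) (auto simp: less_Suc_eq intro: less_le_trans)
    next
      case False
      with j show ?thesis
        by (intro exI[of _ j]) (auto simp: less_Suc_eq)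
    qed
  qed simp
qed simp

lemma ex_last_argmin:
  fixes f :: "nat \<Rightarrow> 'a::linorder"
  assumes "0 < n"
  shows "\<exists>j<n. (\<forall>i<n. f j \<le> f i) \<and> (\<forall>i. j < i \<and> i < n \<longrightarrow> f j < f i)"
  using assms
proof (induction n)
  case (Suc n)
  show ?case
  proof (cases "n = 0")
    case False
    then obtain j where j: "j < n" "\<forall>i<n. f j \<le> f i" "\<forall>i. j < i \<and> i < n \<longrightarrow> f j < f i"
      using Suc.IH by blast
    show ?thesis
    proof (cases "f n \<le> f j")
      case True
      with j show ?thesis
        by (intro exI[of _ n]) (auto simp: less_Suc_eq intro: order_trans)
    next
      case False
      with j show ?thesis
        by (intro exI[of _ j]) (auto simp: less_Suc_eq)
    qed
  qed simp
qed simp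

definition ballot_splits :: "nat list \<Rightarrow> nat set" where
  "ballot_splits p = {j. j \<le> length p \<and> ballot (rev (take j p)) \<and> ballot (drop j p)}"

definition ascent_cut :: "nat list \<Rightarrow> nat \<Rightarrow> bool" where
  "ascent_cut p j \<longleftrightarrow> 0 < j \<and> (j = length p \<or> p ! (j - 1) < p ! j)"

lemma finite_ballot_splits [simp]: "finite (ballot_splits p)"
  by (rule finite_subset[of _ "{..length p}"]) (auto simp: ballot_splits_def)

lemma ballot_splits_iff_height:
  "j \<in> ballot_splits p \<longleftrightarrow> j \<le> length p \<and> (\<forall>i<j. height p (j - 1) \<le> height p i)
     \<and> (\<forall>i. j \<le> i \<and> i < length p \<longrightarrow> height p j \<le> height p i)"
  by (auto simp: ballot_splits_def ballot_rev_take_iff_height ballot_drop_iff_height)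

lemma ballot_split_least_if_not_ascent_cut:
  assumes "distinct p" "j \<in> ballot_splits p" "j' \<in> ballot_splits p" "\<not> ascent_cut p j"
  shows "j \<le> j'"
proof (rule ccontr)
  assume "\<not> j \<le> j'"
  with assms have j: "Suc (j - 1) = j" "j < length p" "\<not> p ! (j - 1) < p ! j"
    by (auto simp: ascent_cut_def ballot_splits_def)
  then have "height p j = height p (j - 1) - 1"
    using height_Suc_distinct[OF assms(1), of "j - 1"] by simp
  moreover have "height p (j - 1) \<le> height p j'" "height p j' \<le> height p j"
    using assms(2,3) \<open>\<not> j \<le> j'\<close> j(2) by (auto simp: ballot_splits_iff_height)
  ultimately show False
    by simp
qed

lemma ballot_split_greatest_if_ascent_cut:
  assumes "distinct p" "j \<in> ballot_splits p" "j' \<in> ballot_splits p" "ascent_cut p j"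
  shows "j' \<le> j"
proof (rule ccontr)
  assume "\<not> j' \<le> j"
  with assms have j: "Suc (j - 1) = j" "j < length p" "p ! (j - 1) < p ! j"
    by (auto simp: ascent_cut_def ballot_splits_def)
  then have "height p j = height p (j - 1) + 1"
    using height_Suc_distinct[OF assms(1), of "j - 1"] by simp
  moreover have "height p (j' - 1) \<le> height p (j - 1)" "height p j \<le> height p (j' - 1)"
    using assms(2,3) \<open>\<not> j' \<le> j\<close>
    by (auto simp: ballot_splits_iff_height dest!: spec[of _ "j - 1"] spec[of _ "j' - 1"])
  ultimately show False
    by simp
qed

lemma ex_ballot_split_not_ascent_cut:
  assumes "distinct p"
  shows "\<exists>j\<in>ballot_splits p. \<not> ascent_cut p j"
proof (cases "p = []")
  case True
  then show ?thesis
    by (auto simp: ballot_splits_def ascent_cut_def ballot_def)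
next
  case False
  then obtain j where j: "j < length p" "\<forall>i<length p. height p j \<le> height p i"
    "\<forall>i<j. height p j < height p i"
    using ex_first_argmin[of "length p" "height p"] by auto
  have "height p (j - 1) = height p j + 1 \<and> \<not> p ! (j - 1) < p ! j" if "0 < j"
    using that j(1) j(3)[rule_format, of "j - 1"] height_Suc_distinct[OF assms, of "j - 1"]
    by (auto split: if_splits)
  with j have "j \<in> ballot_splits p" "\<not> ascent_cut p j"
    by (fastforce simp: ballot_splits_iff_height ascent_cut_def)+
  then show ?thesis ..
qed

lemma ex_ballot_split_ascent_cut:
  assumes "distinct p" "p \<noteq> []"
  shows "\<exists>j\<in>ballot_splits p. ascent_cut p j"
proof -
  obtain k where k: "k < length p" "\<forall>i<length p. height p k \<le> height p i"
    "\<forall>i. k < i \<and> i < length p \<longrightarrow> height p k < height p i"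
    using ex_last_argmin[of "length p" "height p"] assms(2) by auto
  have "height p (Suc k) = height p k + 1 \<and> p ! k < p ! Suc k" if "Suc k < length p"
    using that k height_Suc_distinct[OF assms(1) that] by (auto split: if_splits)
  with k have "Suc k \<in> ballot_splits p" "ascent_cut p (Suc k)"
    by (fastforce simp: ballot_splits_iff_height ascent_cut_def Suc_le_eq)+
  then show ?thesis ..
qed

lemma card_ballot_splits_ascent_cut:
  assumes "distinct p"
  shows "card {j \<in> ballot_splits p. ascent_cut p j} = of_bool (p \<noteq> [])"
proof (cases "p = []")
  case True
  then have "{j \<in> ballot_splits p. ascent_cut p j} = {}"
    by (auto simp: ballot_splits_def ascent_cut_def)
  with True show ?thesis
    by simp
next
  case False
  then obtain j where j: "j \<in> ballot_splits p" "ascent_cut p j"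
    using ex_ballot_split_ascent_cut[OF assms] by blast
  then have "{j \<in> ballot_splits p. ascent_cut p j} = {j}"
    using ballot_split_greatest_if_ascent_cut[OF assms] by (auto intro: antisym)
  with False show ?thesis
    by simp
qed

lemma card_ballot_splits_not_ascent_cut:
  assumes "distinct p"
  shows "card {j \<in> ballot_splits p. \<not> ascent_cut p j} = 1"
proof -
  obtain j where j: "j \<in> ballot_splits p" "\<not> ascent_cut p j"
    using ex_ballot_split_not_ascent_cut[OF assms] by blast
  then have "{j \<in> ballot_splits p. \<not> ascent_cut p j} = {j}"
    using ballot_split_least_if_not_ascent_cut[OF assms] by (auto intro: antisym)
  then show ?thesis
    by simp
qed

lemma sum_ballot_splits_ascent_cut:
  fixes t :: "'a::comm_semiring_1"
  assumes "distinct p"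
  shows "(\<Sum>j\<in>ballot_splits p. if ascent_cut p j then t else 1) = 1 + t * of_bool (p \<noteq> [])"
proof -
  have "(\<Sum>j\<in>ballot_splits p. if ascent_cut p j then t else 1)
      = of_nat (card {j \<in> ballot_splits p. ascent_cut p j}) * t
        + of_nat (card {j \<in> ballot_splits p. \<not> ascent_cut p j})"
    by (simp add: sum.If_cases Int_def Collect_neg_eq[symmetric])
  then show ?thesis
    using card_ballot_splits_ascent_cut[OF assms] card_ballot_splits_not_ascent_cut[OF assms]
    by (simp add: add.commute)
qed

lemma ascent_cut_iff_rev_take_drop:
  assumes "j \<le> length p"
  shows "ascent_cut p j \<longleftrightarrow>
    rev (take j p) \<noteq> [] \<and> (drop j p = [] \<or> hd (rev (take j p)) < hd (drop j p))"
proof -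
  have "last (take j p) = p ! (j - 1)" if "0 < j"
    using assms that by (subst last_conv_nth) auto
  with assms show ?thesis
    by (cases "j = length p") (auto simp: ascent_cut_def hd_rev hd_drop_conv_nth)
qed

section \<open>Pairs of ballot permutations\<close>

definition pkdes_weight :: "real \<Rightarrow> real \<Rightarrow> nat list \<Rightarrow> real" where
  "pkdes_weight y t p = y ^ pk p * t ^ des p"

lemma pkdes_weight_rev_append_ballot:
  fixes t y :: real
  assumes "t \<noteq> 0" "distinct (a @ b)" "ballot a" "ballot b"
  shows "t ^ length a * pkdes_weight y (1 / t) a * pkdes_weight y t b
           = (if a \<noteq> [] \<and> (b = [] \<or> hd a < hd b) then t else 1) * pkdes_weight y t (rev a @ b)"
proof (cases "a = []")
  case False
  have "length a = asc a + des a + 1"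
    using assms(2) asc_add_des[of a] False by auto
  then have "t ^ length a * (1 / t) ^ des a = t * t ^ asc a"
    using assms(1) by (simp add: power_add power_one_over field_simps)
  moreover have "hd a \<noteq> hd b" if "b \<noteq> []"
    using assms(2) False that by (auto simp: hd_in_set dest: disjoint_iff_not_equal[THEN iffD1])
  ultimately show ?thesis
    using False
    by (auto simp: pkdes_weight_def des_rev_append pk_rev_append_ballot[OF assms(3,4)]
        power_add mult_ac)
qed (simp add: pkdes_weight_def)

definition ballot_pairs :: "nat \<Rightarrow> (nat list \<times> nat list) set" where
  "ballot_pairs n = {(a, b). rev a @ b \<in> permutations_of_set {1..n} \<and> ballot a \<and> ballot b}"

definition ballot_perms_of :: "nat set \<Rightarrow> nat list set" where
  "ballot_perms_of S = {p \<in> permutations_of_set S. ballot p}"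

lemma finite_ballot_perms_of [simp]: "finite (ballot_perms_of S)"
  by (simp add: ballot_perms_of_def)

lemma sum_ballot_pairs_by_splits:
  "(\<Sum>(a, b)\<in>ballot_pairs n. f a b)
     = (\<Sum>p\<in>permutations_of_set {1..n}. \<Sum>j\<in>ballot_splits p. f (rev (take j p)) (drop j p))"
proof -
  let ?P = "SIGMA p:permutations_of_set {1..n}. ballot_splits p"
  have "bij_betw (\<lambda>(p, j). (rev (take j p), drop j p)) ?P (ballot_pairs n)"
    by (rule bij_betw_byWitness[where f' = "\<lambda>(a, b). (rev a @ b, length a)"])
      (auto simp: ballot_splits_def ballot_pairs_def)
  then have "(\<Sum>(a, b)\<in>ballot_pairs n. f a b) = (\<Sum>(p, j)\<in>?P. f (rev (take j p)) (drop j p))"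
    by (simp add: sum.reindex_bij_betw[symmetric] split_def)
  also have "\<dots> = (\<Sum>p\<in>permutations_of_set {1..n}. \<Sum>j\<in>ballot_splits p. f (rev (take j p)) (drop j p))"
    by (rule sum.Sigma[symmetric]) auto
  finally show ?thesis .
qed

lemma sum_ballot_pairs_by_subsets:
  "(\<Sum>(a, b)\<in>ballot_pairs n. f a b)
     = (\<Sum>S\<in>Pow {1..n}. \<Sum>a\<in>ballot_perms_of S. \<Sum>b\<in>ballot_perms_of ({1..n} - S). f a b)"
proof -
  let ?P = "SIGMA S:Pow {1..n}. ballot_perms_of S \<times> ballot_perms_of ({1..n} - S)"
  have "bij_betw snd ?P (ballot_pairs n)"
  proof (rule bij_betw_byWitness[where f' = "\<lambda>(a, b). (set a, (a, b))"])
    show "\<forall>x\<in>?P. (\<lambda>(a, b). (set a, (a, b))) (snd x) = x"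
      by (auto simp: ballot_perms_of_def permutations_of_setD)
    show "snd ` ?P \<subseteq> ballot_pairs n" "(\<lambda>(a, b). (set a, (a, b))) ` ballot_pairs n \<subseteq> ?P"
      by (auto simp: ballot_pairs_def ballot_perms_of_def permutations_of_set_def)
  qed auto
  then have "(\<Sum>(a, b)\<in>ballot_pairs n. f a b) = (\<Sum>(S, a, b)\<in>?P. f a b)"
    by (simp add: sum.reindex_bij_betw[symmetric] split_def)
  also have "\<dots> = (\<Sum>S\<in>Pow {1..n}. \<Sum>a\<in>ballot_perms_of S. \<Sum>b\<in>ballot_perms_of ({1..n} - S). f a b)"
    by (subst sum.Sigma[symmetric]) (auto simp: sum.cartesian_product finite_subset)
  finally show ?thesis .
qed

lemma sum_ballot_perms_of_image:
  assumes "strict_mono_on A g"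
  shows "(\<Sum>p\<in>ballot_perms_of (g ` A). pkdes_weight y t p)
           = (\<Sum>p\<in>ballot_perms_of A. pkdes_weight y t p)"
proof -
  have mono: "strict_mono_on (set q) g" if "q \<in> permutations_of_set A" for q
    using that assms by (auto simp: permutations_of_set_def intro: monotone_on_subset)
  have "ballot_perms_of (g ` A) = map g ` ballot_perms_of A"
    using permutations_of_set_image_inj[OF strict_mono_on_imp_inj_on[OF assms]]
    by (auto simp: ballot_perms_of_def ballot_map_strict_mono_on[OF mono])
  moreover have "inj_on (map g) (ballot_perms_of A)"
    by (rule inj_on_mapI, rule inj_on_subset[OF strict_mono_on_imp_inj_on[OF assms]])
      (auto simp: ballot_perms_of_def permutations_of_set_def)
  ultimately show ?thesis
    by (simp add: sum.reindex ballot_perms_of_def pkdes_weight_def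
        pk_map_strict_mono_on[OF mono] des_map_strict_mono_on[OF mono])
qed

lemma sum_ballot_perms_of_card:
  assumes "finite S"
  shows "(\<Sum>p\<in>ballot_perms_of S. pkdes_weight y t p)
           = (\<Sum>p\<in>ballot_perms (card S). pkdes_weight y t p)"
proof -
  have "strict_mono_on {..<card S} (enumerate S)"
    using finite_enumerate_mono[OF _ assms] by (auto intro: strict_mono_onI)
  moreover have "enumerate S ` {..<card S} = S"
    using finite_bij_enumerate[OF assms] by (rule bij_betw_imp_surj_on)
  ultimately have "(\<Sum>p\<in>ballot_perms_of S. pkdes_weight y t p)
      = (\<Sum>p\<in>ballot_perms_of {..<card S}. pkdes_weight y t p)"
    using sum_ballot_perms_of_image by metis
  also have "\<dots> = (\<Sum>p\<in>ballot_perms_of (Suc ` {..<card S}). pkdes_weight y t p)"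
    by (rule sum_ballot_perms_of_image[symmetric]) (auto intro: strict_mono_onI)
  also have "Suc ` {..<card S} = {1..card S}"
    by (simp add: lessThan_atLeast0 atLeastLessThanSuc_atLeastAtMost)
  finally show ?thesis
    by (simp add: ballot_perms_def ballot_perms_of_def)
qed

lemma sum_Pow_card:
  "(\<Sum>S\<in>Pow {1..n}. f (card S)) = (\<Sum>k\<le>n. of_nat (n choose k) * f k)"
proof -
  have "(\<Sum>S\<in>Pow {1..n}. f (card S)) = (\<Sum>k\<le>n. \<Sum>S\<in>{S \<in> Pow {1..n}. card S = k}. f (card S))"
    by (rule sum.group[symmetric]) (auto simp: card_mono[of "{1..n}", simplified])
  also have "\<dots> = (\<Sum>k\<le>n. of_nat (n choose k) * f k)"
    using n_subsets[of "{1..n}"] by (intro sum.cong) simp_all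
  finally show ?thesis .
qed

lemma sum_ballot_splits_pkdes_weight:
  fixes t y :: real
  assumes "t \<noteq> 0" "distinct p"
  shows "(\<Sum>j\<in>ballot_splits p. t ^ length (rev (take j p))
            * pkdes_weight y (1 / t) (rev (take j p)) * pkdes_weight y t (drop j p))
           = (1 + t * of_bool (p \<noteq> [])) * pkdes_weight y t p"
proof -
  have "t ^ length (rev (take j p)) * pkdes_weight y (1 / t) (rev (take j p)) * pkdes_weight y t (drop j p)
      = (if ascent_cut p j then t else 1) * pkdes_weight y t p"
    if j: "j \<in> ballot_splits p" for j
  proof -
    have "distinct (rev (take j p) @ drop j p)"
      using assms(2) distinct_append[of "take j p" "drop j p"] by simp
    moreover have "j \<le> length p" "ballot (rev (take j p))" "ballot (drop j p)"
      using j by (simp_all add: ballot_splits_def)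
    ultimately show ?thesis
      by (subst pkdes_weight_rev_append_ballot[OF assms(1)])
        (simp_all add: ascent_cut_iff_rev_take_drop)
  qed
  then show ?thesis
    by (simp add: sum_distrib_right[symmetric] sum_ballot_splits_ascent_cut[OF assms(2)])
qed

lemma sum_ballot_pairs_pkdes_weight_by_splits:
  fixes t y :: real
  assumes "t \<noteq> 0"
  shows "(\<Sum>(a, b)\<in>ballot_pairs n. t ^ length a * pkdes_weight y (1 / t) a * pkdes_weight y t b)
           = (1 + t) * (\<Sum>p\<in>permutations_of_set {1..n}. pkdes_weight y t p) - of_bool (n = 0) * t"
proof -
  have "distinct p" "p \<noteq> [] \<longleftrightarrow> n \<noteq> 0" if "p \<in> permutations_of_set {1..n}" for p
    using that by (simp_all add: permutations_of_set_def Suc_le_eq flip: set_empty)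
  then have "(\<Sum>(a, b)\<in>ballot_pairs n. t ^ length a * pkdes_weight y (1 / t) a * pkdes_weight y t b)
      = (\<Sum>p\<in>permutations_of_set {1..n}. (1 + t * of_bool (n \<noteq> 0)) * pkdes_weight y t p)"
    unfolding sum_ballot_pairs_by_splits
    by (intro sum.cong refl, subst sum_ballot_splits_pkdes_weight[OF assms]) simp_all
  then show ?thesis
    by (cases "n = 0") (simp_all add: pkdes_weight_def sum_distrib_left algebra_simps)
qed

lemma sum_ballot_pairs_pkdes_weight_by_subsets:
  "(\<Sum>(a, b)\<in>ballot_pairs n. t ^ length a * pkdes_weight y c a * pkdes_weight y t b)
     = (\<Sum>k\<le>n. of_nat (n choose k) * (t ^ k * (\<Sum>p\<in>ballot_perms k. pkdes_weight y c p))
          * (\<Sum>p\<in>ballot_perms (n - k). pkdes_weight y t p))"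
proof -
  let ?B = "\<lambda>c k. \<Sum>p\<in>ballot_perms k. pkdes_weight y c p"
  have "(\<Sum>a\<in>ballot_perms_of S. \<Sum>b\<in>ballot_perms_of ({1..n} - S).
          t ^ length a * pkdes_weight y c a * pkdes_weight y t b)
      = t ^ card S * ?B c (card S) * ?B t (n - card S)"
    if "S \<in> Pow {1..n}" for S
  proof -
    have "finite S" "card ({1..n} - S) = n - card S"
      using that by (auto simp: card_Diff_subset finite_subset)
    moreover have "(\<Sum>a\<in>ballot_perms_of S. t ^ length a * pkdes_weight y c a)
        = t ^ card S * (\<Sum>a\<in>ballot_perms_of S. pkdes_weight y c a)"
      unfolding sum_distrib_left
      by (intro sum.cong) (auto simp: ballot_perms_of_def length_finite_permutations_of_set)
    ultimately show ?thesis
      by (simp add: sum_product[symmetric] sum_ballot_perms_of_card)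
  qed
  then have "(\<Sum>(a, b)\<in>ballot_pairs n. t ^ length a * pkdes_weight y c a * pkdes_weight y t b)
      = (\<Sum>S\<in>Pow {1..n}. t ^ card S * ?B c (card S) * ?B t (n - card S))"
    unfolding sum_ballot_pairs_by_subsets by (rule sum.cong[OF refl])
  also have "\<dots> = (\<Sum>k\<le>n. of_nat (n choose k) * (t ^ k * ?B c k * ?B t (n - k)))"
    by (rule sum_Pow_card)
  finally show ?thesis
    by (simp add: mult.assoc)
qed

lemma fps_mult_nth_egf:
  fixes a b :: "nat \<Rightarrow> 'a::field_char_0"
  shows "fps_nth (Abs_fps (\<lambda>k. a k / fact k) * Abs_fps (\<lambda>k. b k / fact k)) n
           = (\<Sum>k\<le>n. of_nat (n choose k) * a k * b (n - k)) / fact n"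
  unfolding fps_mult_nth atLeast0AtMost sum_divide_distrib
  by (intro sum.cong) (simp_all add: binomial_fact field_simps)

theorem theorem3p3:
  fixes y t :: real
  assumes "t \<noteq> 0"
  shows "(Bgf y (1 / t) oo (fps_const t * fps_X)) * Bgf y t
           = fps_const (1 + t) * Pgf y t - fps_const t"
proof (rule fps_ext)
  fix n
  let ?B = "\<lambda>c k. \<Sum>p\<in>ballot_perms k. pkdes_weight y c p"
  let ?P = "\<Sum>p\<in>permutations_of_set {1..n}. pkdes_weight y t p"
  have "Bgf y (1 / t) oo (fps_const t * fps_X) = Abs_fps (\<lambda>k. t ^ k * ?B (1 / t) k / fact k)"
    "Bgf y t = Abs_fps (\<lambda>k. ?B t k / fact k)"
    by (simp_all add: fps_compose_linear Bgf_def pkdes_weight_def)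
  then have "fps_nth ((Bgf y (1 / t) oo (fps_const t * fps_X)) * Bgf y t) n
      = (\<Sum>k\<le>n. of_nat (n choose k) * (t ^ k * ?B (1 / t) k) * ?B t (n - k)) / fact n"
    by (simp only: fps_mult_nth_egf)
  also have "\<dots> = ((1 + t) * ?P - of_bool (n = 0) * t) / fact n"
    by (simp only: sum_ballot_pairs_pkdes_weight_by_subsets[symmetric]
        sum_ballot_pairs_pkdes_weight_by_splits[OF assms])
  also have "\<dots> = fps_nth (fps_const (1 + t) * Pgf y t - fps_const t) n"
    by (cases "n = 0") (simp_all add: Pgf_def pkdes_weight_def diff_divide_distrib)
  finally show "fps_nth ((Bgf y (1 / t) oo (fps_const t * fps_X)) * Bgf y t) n
      = fps_nth (fps_const (1 + t) * Pgf y t - fps_const t) n" .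
qed

end
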